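(* Let $N\in\mathbb{N}$ be composite and $p$ a prime factor of $N$ with $p\le b$ for some $b\le N/5$. Let $r,m\in\mathbb{N}$ with $2\le m<p$, $\gcd(N,m)=1$ and $r=p\bmod m$, and put $d=\lceil (b/m)^{1/2}\rceil$. Then the sets \[\{m^{-1}r-n\bmod N:1\le n\le d\}\quad\text{and}\quad\{-dn\bmod N:1\le n\le d\}\] (with $m^{-1}$ the inverse of $m$ modulo $N$) are disjoint subsets of $\{0,\dots,N-1\}$, and there exist $i,j\in\{1,\dots,d\}$ such that $m^{-1}r-j\equiv -di\pmod p$; that is, they form a solution to the Covering Problem for $N$ and $d$.
   Context: Covering Problem: for $N$ and $d$, a solution is a pair of disjoint subsets $\{b_n:1\le n\le d\}$ and $\{s_n:1\le n\le d\}$ of $\{0,\dots,N-1\}$ such that, if $N$ is composite, there exist $i,j\in\{1,\dots,d\}$ and a prime factor $p$ of $N$ with $b_i\equiv s_j\pmod p$. *)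

theory Defs
  imports Complex_Main "HOL-Number_Theory.Number_Theory"
begin

definition covering_solution :: "nat \<Rightarrow> nat \<Rightarrow> (nat \<Rightarrow> int) \<Rightarrow> (nat \<Rightarrow> int) \<Rightarrow> bool" where
  "covering_solution N d bs ss \<longleftrightarrow>
     bs ` {1..d} \<subseteq> {0..<int N} \<and> ss ` {1..d} \<subseteq> {0..<int N} \<and>
     bs ` {1..d} \<inter> ss ` {1..d} = {} \<and>
     ((N > 1 \<and> \<not> prime N) \<longrightarrow>
        (\<exists>i\<in>{1..d}. \<exists>j\<in>{1..d}. \<exists>p. prime p \<and> p dvd N \<and> [bs i = ss j] (mod int p)))"

end

theory Submission
  imports Defs
begin

text \<open>Write \<open>p = q m + r\<close> with \<open>0 < r < m\<close>. Modulo \<open>p\<close> we have \<open>m\<^sup>-\<^sup>1 r \<equiv> m\<^sup>-\<^sup>1 (p - q m) \<equiv> -q\<close>,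
  and \<open>q < p/m \<le> b/m \<le> d\<^sup>2\<close>, so \<open>q = d i - j\<close> with \<open>i, j \<in> {1..d}\<close>, which is the required
  collision modulo \<open>p\<close>. The two sets are disjoint because a collision modulo \<open>N\<close>, multiplied
  by \<open>m\<close>, would make \<open>N\<close> divide \<open>r - m n + m d n'\<close>, a number strictly between \<open>0\<close> and
  \<open>m d\<^sup>2 < 4 b \<le> N\<close>.\<close>

lemma less_ceiling_sqrt_div_square:
  fixes q m :: nat and b :: real
  assumes "0 < m" and "real (q * m) < b"
  shows "q < (nat \<lceil>sqrt (b / m)\<rceil>)\<^sup>2"
proof -
  define s where "s = sqrt (b / m)"
  have "b > 0" using assms(2) of_nat_0_le_iff[of "q * m"] by linarith
  then have "s \<ge> 0" unfolding s_def using assms(1) by simp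
  have "real q < b / m" using assms by (simp add: field_simps)
  also have "\<dots> = s\<^sup>2" unfolding s_def using \<open>b > 0\<close> assms(1) by simp
  also have "\<dots> \<le> (real (nat \<lceil>s\<rceil>))\<^sup>2"
    using \<open>s \<ge> 0\<close> by (intro power_mono) (simp_all add: le_of_int_ceiling)
  finally show ?thesis unfolding s_def by (metis of_nat_less_iff of_nat_power)
qed

lemma mult_ceiling_sqrt_div_square_less:
  fixes m N :: nat and b :: real
  assumes "0 < m" and "real m \<le> b" and "4 * b \<le> real N"
  shows "m * (nat \<lceil>sqrt (b / m)\<rceil>)\<^sup>2 < N"
proof -
  define s where "s = sqrt (b / m)"
  have "b > 0" using assms(1,2) by simp
  have ms2: "m * s\<^sup>2 = b" unfolding s_def using \<open>b > 0\<close> assms(1) by simp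
  have "(m * s)\<^sup>2 \<le> b\<^sup>2"
  proof -
    have "(m * s)\<^sup>2 = m * b" using ms2 by (simp add: power2_eq_square mult_ac)
    also have "\<dots> \<le> b * b" using assms(2) \<open>b > 0\<close> by (simp add: mult_right_mono)
    finally show ?thesis by (simp add: power2_eq_square)
  qed
  then have ms: "m * s \<le> b" using \<open>b > 0\<close> power2_le_imp_le by fastforce
  have "s \<ge> 0" unfolding s_def using \<open>b > 0\<close> by simp
  then have "real (nat \<lceil>s\<rceil>) < s + 1" using ceiling_correct[of s] by simp
  then have "(real (nat \<lceil>s\<rceil>))\<^sup>2 < (s + 1)\<^sup>2" by (simp add: power_strict_mono)
  then have "m * (real (nat \<lceil>s\<rceil>))\<^sup>2 < m * (s + 1)\<^sup>2"
    using assms(1) by simp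
  also have "\<dots> = m * s\<^sup>2 + 2 * (m * s) + m" by (simp add: power2_eq_square algebra_simps)
  also have "\<dots> \<le> real N" using ms2 ms assms(2,3) by linarith
  finally have "real (m * (nat \<lceil>s\<rceil>)\<^sup>2) < real N" by simp
  then show ?thesis unfolding s_def by (simp only: of_nat_less_iff)
qed

lemma less_square_obtains_diff_mult:
  fixes q d :: nat
  assumes "q < d\<^sup>2"
  obtains i j where "i \<in> {1..d}" and "j \<in> {1..d}" and "int q = int d * int i - int j"
proof
  have "0 < d" using assms by (cases d) auto
  then show "q div d + 1 \<in> {1..d}" and "d - q mod d \<in> {1..d}"
    using assms by (auto simp: power2_eq_square div_less_iff_less_mult Suc_le_eq)
  have "int q = int d * int (q div d) + int (q mod d)"
    by (metis div_mult_mod_eq mult.commute of_nat_add of_nat_mult)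
  with \<open>0 < d\<close> show "int q = int d * int (q div d + 1) - int (d - q mod d)"
    by (simp add: of_nat_diff algebra_simps)
qed

lemma cong_inverse_mult_mod_eq_minus_div:
  fixes m u p :: int
  assumes "[m * u = 1] (mod p)"
  shows "[u * (p mod m) = - (p div m)] (mod p)"
proof -
  have "u * (p mod m) = u * p - (m * u) * (p div m)"
    by (simp add: minus_div_mult_eq_mod [symmetric] algebra_simps)
  also have "[\<dots> = 0 - 1 * (p div m)] (mod p)"
    using assms by (intro cong_diff cong_mult) (auto simp: cong_def)
  finally show ?thesis by simp
qed

lemma not_cong_inverse_shift:
  fixes N m r d n n' :: nat and u :: int
  assumes inv: "[int m * u = 1] (mod int N)"
    and "0 < r" and "r < m" and "m * d\<^sup>2 < N"
    and n: "n \<in> {1..d}" and n': "n' \<in> {1..d}"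
  shows "\<not> [u * int r - int n = - int d * int n'] (mod int N)"
proof
  assume "[u * int r - int n = - int d * int n'] (mod int N)"
  then have scaled: "[int m * (u * int r - int n) = int m * (- int d * int n')] (mod int N)"
    by (rule cong_scalar_left)
  have cancelled: "[int m * (u * int r - int n) = 1 * int r - int m * int n] (mod int N)"
  proof -
    have "[int m * u * int r = 1 * int r] (mod int N)" using inv by (rule cong_scalar_right)
    then have "[int m * u * int r - int m * int n = 1 * int r - int m * int n] (mod int N)"
      by (rule cong_diff) simp
    then show ?thesis by (simp add: algebra_simps)
  qed
  have "[1 * int r - int m * int n = int m * (- int d * int n')] (mod int N)"
    using cong_trans[OF cong_sym[OF cancelled] scaled] .
  then have "int N dvd int r - int m * int n + int m * int d * int n'"
    by (simp add: cong_iff_dvd_diff algebra_simps)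
  moreover have "int m * int n \<le> int m * int d" "int m * 1 \<le> int m * int n"
      "int m * int d * 1 \<le> int m * int d * int n'" "int m * int d * int n' \<le> int m * int d * int d"
    using n n' by (intro mult_left_mono; simp)+
  moreover have "int m * int d * int d < int N"
    using \<open>m * d\<^sup>2 < N\<close> by (simp add: power2_eq_square mult.assoc flip: of_nat_mult)
  ultimately show False
    using \<open>0 < r\<close> \<open>r < m\<close> zdvd_imp_le[of "int N" "int r - int m * int n + int m * int d * int n'"]
    by linarith
qed

theorem corollary4p4:
  fixes N p m r :: nat and b :: real and d :: nat
  assumes composite: "N > 1" "\<not> prime N"
    and p_prime: "prime p" and p_dvd: "p dvd N"
    and p_le_b: "real p \<le> b" and b_le: "b \<le> real N / 5"
    and m_ge: "2 \<le> m" and m_lt: "m < p" and cop: "gcd N m = 1"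
    and r_def: "r = p mod m"
    and d_def: "d = nat \<lceil>sqrt (b / real m)\<rceil>"
  defines "minv \<equiv> modular_inverse (int N) (int m)"
  shows "(\<lambda>n. (minv * int r - int n) mod int N) ` {1..d} \<subseteq> {0..<int N}
       \<and> (\<lambda>n. (- int d * int n) mod int N) ` {1..d} \<subseteq> {0..<int N}
       \<and> (\<lambda>n. (minv * int r - int n) mod int N) ` {1..d}
           \<inter> (\<lambda>n. (- int d * int n) mod int N) ` {1..d} = {}
       \<and> (\<exists>i\<in>{1..d}. \<exists>j\<in>{1..d}. [minv * int r - int j = - int d * int i] (mod int p))
       \<and> covering_solution N d (\<lambda>n. (minv * int r - int n) mod int N)
                              (\<lambda>n. (- int d * int n) mod int N)"
proof -
  have inv: "[int m * minv = 1] (mod int N)"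
    unfolding minv_def using cop
    by (intro cong_modular_inverse1) (metis coprime_iff_gcd_eq_1 coprime_commute coprime_int_iff)
  have "\<not> m dvd p" using p_prime m_ge m_lt unfolding prime_nat_iff by auto
  then have r_pos: "0 < r" unfolding r_def by (simp add: dvd_eq_mod_eq_0)
  have r_lt: "r < m" unfolding r_def using m_ge by simp
  have "p div m * m < p" using r_pos div_mult_mod_eq[of p m] unfolding r_def by linarith
  then have "real (p div m * m) < b" using p_le_b by (metis of_nat_less_iff less_le_trans)
  then have "p div m < d\<^sup>2" unfolding d_def using m_ge by (intro less_ceiling_sqrt_div_square) auto
  then obtain i j where i: "i \<in> {1..d}" and j: "j \<in> {1..d}"
    and quotient: "int (p div m) = int d * int i - int j"
    by (rule less_square_obtains_diff_mult)
  have "[minv * int r = - int (p div m)] (mod int p)"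
    using cong_inverse_mult_mod_eq_minus_div[OF cong_dvd_modulus[OF inv]] p_dvd
    by (simp add: r_def zmod_int zdiv_int)
  then have collision: "[minv * int r - int j = - int d * int i] (mod int p)"
    unfolding quotient by (simp add: cong_diff_iff_cong_0 cong_iff_dvd_diff algebra_simps)
  have "m * d\<^sup>2 < N"
    unfolding d_def using m_ge m_lt p_le_b b_le by (intro mult_ceiling_sqrt_div_square_less) auto
  then have disjoint: "(\<lambda>n. (minv * int r - int n) mod int N) ` {1..d}
           \<inter> (\<lambda>n. (- int d * int n) mod int N) ` {1..d} = {}"
    using not_cong_inverse_shift[OF inv r_pos r_lt] by (auto simp: cong_def)
  have "[(minv * int r - int j) mod int N = (- int d * int i) mod int N] (mod int p)"
    using collision p_dvd by (simp add: cong_def mod_mod_cancel)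
  then show ?thesis
    using disjoint collision i j p_prime p_dvd composite
    unfolding covering_solution_def by auto
qed

end
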